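(* Let $\hat{a}\in\mathbb{C}$, $\hat{a}\neq 0$, and $\hat{d}\in\mathbb{Z}$, $\hat{d}\geq 0$. Let $F_0,F_1$ be causal filters with $\gcd(F_0,F_1)=z^{-d_F}$ where $0\leq d_F\leq \hat{d}$, and let $M\in\mathbb{Z}$ satisfy $0\leq M\leq \hat{d}-d_F$. (i) If $F_0\neq 0$, there exists a unique causal complement $(R_0,R_1)$ to $(F_0,F_1)$ for inhomogeneity $\hat{a}z^{-\hat{d}}$ that is degree-reducing modulo $M$ in $F_0$, i.e. with $z^{-M}\mid R_0$, $z^{-M}\mid R_1$ and $\deg(R_0)<\deg(F_0)-\deg\gcd(F_0,F_1)+M$. (ii) If $F_1\neq 0$, there exists a unique causal complement $(R'_0,R'_1)$ to $(F_0,F_1)$ for inhomogeneity $\hat{a}z^{-\hat{d}}$ that is degree-reducing modulo $M$ in $F_1$, i.e. with $z^{-M}\mid R'_0$, $z^{-M}\mid R'_1$ and $\deg(R'_1)<\deg(F_1)-\deg\gcd(F_0,F_1)+M$. (iii) If $F_0,F_1\neq 0$ and $(R_0,R_1)$, $(R'_0,R'_1)$ are the complements of (i) and (ii), then $(R_0,R_1)=(R'_0,R'_1)$ if and only if $\hat{d}<\deg(F_0)+\deg(F_1)-\deg\gcd(F_0,F_1)+M$.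
   Context: A causal filter is a polynomial in $z^{-1}$ with complex coefficients; $\deg$ denotes degree as a polynomial in $z^{-1}$ (with $\deg 0=-\infty$). Divisibility and gcd are taken in $\mathbb{C}[z^{-1}]$ (gcd determined up to nonzero constant; "$\gcd(F_0,F_1)=z^{-d_F}$" means the gcd is $z^{-d_F}$ up to a nonzero constant). Given causal $F_0,F_1$, an ordered pair $(R_0,R_1)$ of causal filters is a causal complement to $(F_0,F_1)$ for inhomogeneity $\hat{a}z^{-\hat{d}}$ if $F_0(z)R_1(z)-F_1(z)R_0(z)=\hat{a}z^{-\hat{d}}$. The pair $(R_0,R_1)$ has multiplicity $M$ if $z^{-M}$ divides both $R_0$ and $R_1$. For $\ell\in\{0,1\}$, a causal complement $(R_0,R_1)$ is degree-reducing modulo $M$ in $F_\ell$ if it has multiplicity $M$ and $\deg(R_\ell)<\deg(F_\ell)-\deg\gcd(F_0,F_1)+M$. *)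

theory Defs
  imports "HOL-Computational_Algebra.Polynomial_Factorial" "HOL-Computational_Algebra.Field_as_Ring" "HOL-Library.Extended_Real"
begin

text \<open>A causal filter is a polynomial in the indeterminate w = z^(-1) with complex
coefficients, represented as complex poly; z^(-k) is the monomial monom 1 k.\<close>

definition fdeg :: "complex poly \<Rightarrow> ereal" where
  "fdeg p = (if p = 0 then -\<infinity> else ereal (real (degree p)))"

definition causal_complement ::
  "complex poly \<Rightarrow> complex poly \<Rightarrow> complex \<Rightarrow> nat \<Rightarrow> complex poly \<Rightarrow> complex poly \<Rightarrow> bool" where
  "causal_complement F0 F1 a d R0 R1 \<longleftrightarrow> F0 * R1 - F1 * R0 = monom a d"

definition has_multiplicity :: "nat \<Rightarrow> complex poly \<Rightarrow> complex poly \<Rightarrow> bool" where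
  "has_multiplicity M R0 R1 \<longleftrightarrow> monom 1 M dvd R0 \<and> monom 1 M dvd R1"

text \<open>Degree-reducing modulo M in F_l (l = 0 or l = 1; any l \<noteq> 0 means F_1).\<close>
definition degree_reducing ::
  "complex poly \<Rightarrow> complex poly \<Rightarrow> complex \<Rightarrow> nat \<Rightarrow> nat \<Rightarrow> nat \<Rightarrow> complex poly \<Rightarrow> complex poly \<Rightarrow> bool" where
  "degree_reducing F0 F1 a d M l R0 R1 \<longleftrightarrow>
     causal_complement F0 F1 a d R0 R1 \<and> has_multiplicity M R0 R1 \<and>
     (if l = 0 then fdeg R0 < fdeg F0 - fdeg (gcd F0 F1) + ereal (real M)
      else fdeg R1 < fdeg F1 - fdeg (gcd F0 F1) + ereal (real M))"

end

theory Submission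
  imports Defs
begin

text \<open>Factor \<open>F_i = z^(-d_F) G_i\<close> with \<open>G_0\<close>, \<open>G_1\<close> coprime and write \<open>R_i = z^(-M) S_i\<close>.
  The complement equation becomes \<open>G_0 S_1 - G_1 S_0 = a z^(-e)\<close> with \<open>e = d - d_F - M\<close>, and
  degree reduction in \<open>F_0\<close> says that \<open>S_0\<close> is reduced modulo \<open>G_0\<close>. Reducing a Bezout
  solution modulo \<open>G_0\<close> gives exactly one such solution; degree reduction in \<open>F_1\<close> is the
  same problem with \<open>G_0\<close> and \<open>G_1\<close> exchanged. The solution reduced modulo \<open>G_0\<close> is also
  reduced modulo \<open>G_1\<close> exactly when \<open>e < deg G_0 + deg G_1\<close>, because
  \<open>G_0 S_1 = a z^(-e) + G_1 S_0\<close> and \<open>deg (G_1 S_0) < deg G_0 + deg G_1\<close>.\<close>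

definition reduced_bezout_solution ::
  "'a::field poly \<Rightarrow> 'a poly \<Rightarrow> 'a poly \<Rightarrow> 'a poly \<Rightarrow> 'a poly \<Rightarrow> bool" where
  "reduced_bezout_solution A B c X Y \<longleftrightarrow> A * Y - B * X = c \<and> (X = 0 \<or> degree X < degree A)"

lemma reduced_bezout_solution_unique:
  fixes A B :: "'a::field_gcd poly"
  assumes "coprime A B" and A: "A \<noteq> 0"
    and "reduced_bezout_solution A B c X Y" and "reduced_bezout_solution A B c X' Y'"
  shows "X = X' \<and> Y = Y'"
proof -
  have eq: "A * (Y - Y') = B * (X - X')"
    using assms(3,4) by (simp add: reduced_bezout_solution_def algebra_simps)
  then have "A dvd X - X'"
    using assms(1) by (metis coprime_dvd_mult_right_iff dvd_triv_left)
  moreover have "X - X' = 0 \<or> degree (X - X') < degree A"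
    using assms(3,4) degree_diff_less[of X "degree A" X']
    by (auto simp: reduced_bezout_solution_def)
  ultimately have "X = X'"
    by (auto dest: dvd_imp_degree_le)
  with eq A show ?thesis
    by simp
qed

lemma reduced_bezout_solution_exists:
  fixes A B :: "'a::field_gcd poly"
  assumes "coprime A B" and "A \<noteq> 0"
  obtains X Y where "reduced_bezout_solution A B c X Y"
proof -
  obtain u v where uv: "u * A + v * B = 1"
    using bezout_coefficients_fst_snd[of A B] assms(1) by auto
  define X0 where "X0 = - (c * v)"
  define X where "X = X0 mod A"
  define Y where "Y = c * u - X0 div A * B"
  have X: "X = X0 - X0 div A * A"
    by (simp add: X_def minus_div_mult_eq_mod)
  have "A * Y - B * X = A * (c * u) - B * X0"
    unfolding X Y_def by (simp add: algebra_simps)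
  also have "\<dots> = c * (u * A + v * B)"
    by (simp add: X0_def algebra_simps)
  finally have "A * Y - B * X = c"
    using uv by simp
  moreover have "X = 0 \<or> degree X < degree A"
    unfolding X_def using assms(2) by (rule degree_mod_less)
  ultimately show ?thesis
    using that by (simp add: reduced_bezout_solution_def)
qed

lemma reduced_bezout_solution_swap_iff:
  fixes A B :: "'a::field poly"
  assumes sol: "reduced_bezout_solution A B c X Y" and c: "c \<noteq> 0"
  shows "reduced_bezout_solution B A (- c) Y X \<longleftrightarrow> degree c < degree A + degree B"
proof -
  have eq: "A * Y - B * X = c" and X: "X = 0 \<or> degree X < degree A"
    using sol by (auto simp: reduced_bezout_solution_def)
  have A: "A \<noteq> 0"
    using eq X c by auto
  have BX: "B * X = 0 \<or> degree (B * X) < degree A + degree B"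
    using X degree_mult_le[of B X] by auto
  have "reduced_bezout_solution B A (- c) Y X \<longleftrightarrow> Y = 0 \<or> degree Y < degree B"
    using eq by (auto simp: reduced_bezout_solution_def)
  also have "\<dots> \<longleftrightarrow> degree c < degree A + degree B"
  proof
    assume "Y = 0 \<or> degree Y < degree B"
    then have AY: "A * Y = 0 \<or> degree (A * Y) < degree A + degree B"
      using degree_mult_le[of A Y] by auto
    have "A * Y \<noteq> 0 \<or> B * X \<noteq> 0"
      using eq c by auto
    then have "0 < degree A + degree B"
      using AY BX by auto
    then show "degree c < degree A + degree B"
      using AY BX degree_diff_less[of "A * Y" "degree A + degree B" "B * X"] eq by auto
  next
    assume lt: "degree c < degree A + degree B"
    show "Y = 0 \<or> degree Y < degree B"
    proof (cases "Y = 0")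
      case False
      have "A * Y = c + B * X"
        using eq by (simp add: algebra_simps)
      then have "degree (A * Y) < degree A + degree B"
        using lt BX degree_add_less[of c "degree A + degree B" "B * X"] by auto
      with A False show ?thesis
        by (simp add: degree_mult_eq)
    qed simp
  qed
  finally show ?thesis .
qed

lemma ex1_pairI:
  assumes "P x y" and "\<And>x' y'. P x' y' \<Longrightarrow> x' = x \<and> y' = y"
  shows "\<exists>!(x, y). P x y"
proof (rule ex1I[of _ "(x, y)"])
  fix p
  assume "case p of (x', y') \<Rightarrow> P x' y'"
  then show "p = (x, y)"
    using assms(2) by (cases p) simp
qed (use assms(1) in simp)

lemma fdeg_monom_mult:
  "p \<noteq> 0 \<Longrightarrow> fdeg (monom 1 k * p) = ereal (real (k + degree p))"
  by (simp add: fdeg_def degree_mult_eq degree_monom_eq)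

lemma fdeg_monom_mult_less_iff:
  "fdeg (monom 1 k * p) < ereal (real (n + k)) \<longleftrightarrow> p = 0 \<or> degree p < n"
  by (cases "p = 0") (simp_all add: fdeg_def degree_mult_eq degree_monom_eq)

lemma has_multiplicity_iff:
  "has_multiplicity M R0 R1 \<longleftrightarrow> (\<exists>X Y. R0 = monom 1 M * X \<and> R1 = monom 1 M * Y)"
  unfolding has_multiplicity_def by (auto elim!: dvdE)

lemma causal_complement_monom_mult_iff:
  assumes "F0 = monom 1 dF * G0" and "F1 = monom 1 dF * G1" and "d = dF + M + e"
  shows "causal_complement F0 F1 a d (monom 1 M * X) (monom 1 M * Y)
    \<longleftrightarrow> G0 * Y - G1 * X = monom a e"
proof -
  have "F0 * (monom 1 M * Y) - F1 * (monom 1 M * X) = monom 1 dF * monom 1 M * (G0 * Y - G1 * X)"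
    by (simp add: assms algebra_simps)
  moreover have "monom a d = monom 1 dF * monom 1 M * monom a e"
    by (simp add: assms mult_monom)
  ultimately show ?thesis
    by (simp add: causal_complement_def)
qed

lemma causal_complement_swap:
  "causal_complement F0 F1 a d R0 R1 \<longleftrightarrow> causal_complement F1 F0 (- a) d R1 R0"
proof -
  have "F0 * R1 - F1 * R0 = monom a d \<longleftrightarrow> - (F0 * R1 - F1 * R0) = - monom a d"
    by (rule neg_equal_iff_equal[symmetric])
  also have "\<dots> \<longleftrightarrow> F1 * R0 - F0 * R1 = monom (- a) d"
    by (simp add: minus_monom)
  finally show ?thesis
    unfolding causal_complement_def .
qed

lemma degree_reducing_1_iff_swap:
  "degree_reducing F0 F1 a d M 1 R0 R1 \<longleftrightarrow> degree_reducing F1 F0 (- a) d M 0 R1 R0"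
  unfolding degree_reducing_def has_multiplicity_def causal_complement_swap[of F0]
    gcd.commute[of F1 F0] by auto

locale filter_pair_factorization =
  fixes F0 F1 G0 G1 :: "complex poly" and dF :: nat
  assumes F0_eq: "F0 = monom 1 dF * G0"
    and F1_eq: "F1 = monom 1 dF * G1"
    and gcd_eq: "gcd F0 F1 = monom 1 dF"
    and coprime: "coprime G0 G1"

lemma filter_pair_factorization_exists:
  assumes "gcd F0 F1 = monom 1 dF"
  obtains G0 G1 where "filter_pair_factorization F0 F1 G0 G1 dF"
  using gcd_coprime_exists[of F0 F1] assms that
  by (auto simp: filter_pair_factorization_def mult.commute)

context filter_pair_factorization
begin

lemma swap: "filter_pair_factorization F1 F0 G1 G0 dF"
  using F0_eq F1_eq gcd_eq coprime
  by (simp add: filter_pair_factorization_def gcd.commute coprime_commute)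

lemma degree_reducing_0_iff:
  assumes "F0 \<noteq> 0" and d: "d = dF + M + e"
  shows "degree_reducing F0 F1 a d M 0 R0 R1 \<longleftrightarrow>
    (\<exists>X Y. R0 = monom 1 M * X \<and> R1 = monom 1 M * Y
      \<and> reduced_bezout_solution G0 G1 (monom a e) X Y)"
proof -
  have "G0 \<noteq> 0"
    using F0_eq \<open>F0 \<noteq> 0\<close> by auto
  then have "fdeg F0 - fdeg (gcd F0 F1) + ereal (real M) = ereal (real (degree G0 + M))"
    using fdeg_monom_mult[of G0 dF] fdeg_monom_mult[of 1 dF] unfolding gcd_eq by (simp add: F0_eq)
  then show ?thesis
    unfolding degree_reducing_def has_multiplicity_iff reduced_bezout_solution_def
    using causal_complement_monom_mult_iff[OF F0_eq F1_eq d] fdeg_monom_mult_less_iff[of M]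
    by (auto simp: fdeg_def[of 0])
qed

lemma degree_reducing_0_exists:
  assumes "F0 \<noteq> 0" and "d = dF + M + e"
  obtains R0 R1 where "degree_reducing F0 F1 a d M 0 R0 R1"
proof -
  have "G0 \<noteq> 0"
    using F0_eq assms(1) by auto
  with coprime obtain X Y where "reduced_bezout_solution G0 G1 (monom a e) X Y"
    by (rule reduced_bezout_solution_exists)
  then show ?thesis
    using that degree_reducing_0_iff[OF assms] by blast
qed

lemma degree_reducing_0_unique:
  assumes "F0 \<noteq> 0" and "d = dF + M + e"
    and "degree_reducing F0 F1 a d M 0 R0 R1" and "degree_reducing F0 F1 a d M 0 R0' R1'"
  shows "R0' = R0 \<and> R1' = R1"
proof -
  have "G0 \<noteq> 0"
    using F0_eq assms(1) by auto
  obtain X Y where R: "R0 = monom 1 M * X" "R1 = monom 1 M * Y"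
    and sol: "reduced_bezout_solution G0 G1 (monom a e) X Y"
    using assms(3) degree_reducing_0_iff[OF assms(1,2)] by blast
  obtain X' Y' where R': "R0' = monom 1 M * X'" "R1' = monom 1 M * Y'"
    and sol': "reduced_bezout_solution G0 G1 (monom a e) X' Y'"
    using assms(4) degree_reducing_0_iff[OF assms(1,2)] by blast
  show ?thesis
    using reduced_bezout_solution_unique[OF coprime \<open>G0 \<noteq> 0\<close> sol' sol] R R' by simp
qed

lemma degree_reducing_1_exists:
  assumes "F1 \<noteq> 0" and "d = dF + M + e"
  obtains R0 R1 where "degree_reducing F0 F1 a d M 1 R0 R1"
proof -
  interpret swapped: filter_pair_factorization F1 F0 G1 G0 dF
    by (rule swap)
  obtain R1 R0 where "degree_reducing F1 F0 (- a) d M 0 R1 R0"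
    using swapped.degree_reducing_0_exists[OF assms] .
  then show ?thesis
    using that unfolding degree_reducing_1_iff_swap[of F0] by blast
qed

lemma degree_reducing_1_unique:
  assumes "F1 \<noteq> 0" and "d = dF + M + e"
    and "degree_reducing F0 F1 a d M 1 R0 R1" and "degree_reducing F0 F1 a d M 1 R0' R1'"
  shows "R0' = R0 \<and> R1' = R1"
proof -
  interpret swapped: filter_pair_factorization F1 F0 G1 G0 dF
    by (rule swap)
  have "R1' = R1 \<and> R0' = R0"
    using assms(3,4) unfolding degree_reducing_1_iff_swap[of F0]
    by (rule swapped.degree_reducing_0_unique[OF assms(1,2)])
  then show ?thesis
    by simp
qed

lemma degree_reducing_0_ex1:
  assumes "F0 \<noteq> 0" and "d = dF + M + e"
  shows "\<exists>!(R0, R1). degree_reducing F0 F1 a d M 0 R0 R1"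
proof -
  obtain R0 R1 where R: "degree_reducing F0 F1 a d M 0 R0 R1"
    using degree_reducing_0_exists[OF assms] .
  show ?thesis
    by (rule ex1_pairI, rule R) (rule degree_reducing_0_unique[OF assms R])
qed

lemma degree_reducing_1_ex1:
  assumes "F1 \<noteq> 0" and "d = dF + M + e"
  shows "\<exists>!(R0, R1). degree_reducing F0 F1 a d M 1 R0 R1"
proof -
  obtain R0 R1 where R: "degree_reducing F0 F1 a d M 1 R0 R1"
    using degree_reducing_1_exists[OF assms] .
  show ?thesis
    by (rule ex1_pairI, rule R) (rule degree_reducing_1_unique[OF assms R])
qed

lemma degree_reducing_0_1_iff:
  assumes "a \<noteq> 0" and "F0 \<noteq> 0" and "F1 \<noteq> 0" and d: "d = dF + M + e"
    and R: "degree_reducing F0 F1 a d M 0 R0 R1"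
  shows "degree_reducing F0 F1 a d M 1 R0 R1 \<longleftrightarrow>
    ereal (real d) < fdeg F0 + fdeg F1 - fdeg (gcd F0 F1) + ereal (real M)"
proof -
  interpret swapped: filter_pair_factorization F1 F0 G1 G0 dF
    by (rule swap)
  have G: "G0 \<noteq> 0" "G1 \<noteq> 0"
    using F0_eq F1_eq assms(2,3) by auto
  obtain X Y where R0: "R0 = monom 1 M * X" and R1: "R1 = monom 1 M * Y"
    and sol: "reduced_bezout_solution G0 G1 (monom a e) X Y"
    using R degree_reducing_0_iff[OF assms(2) d] by blast
  have "degree_reducing F0 F1 a d M 1 R0 R1 \<longleftrightarrow> reduced_bezout_solution G1 G0 (- monom a e) Y X"
    unfolding degree_reducing_1_iff_swap[of F0] swapped.degree_reducing_0_iff[OF assms(3) d] R0 R1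
      minus_monom by auto
  also have "\<dots> \<longleftrightarrow> e < degree G0 + degree G1"
    using reduced_bezout_solution_swap_iff[OF sol] assms(1) by (simp add: degree_monom_eq)
  also have "\<dots> \<longleftrightarrow> ereal (real d) < fdeg F0 + fdeg F1 - fdeg (gcd F0 F1) + ereal (real M)"
  proof -
    have "fdeg F0 + fdeg F1 - fdeg (gcd F0 F1) + ereal (real M)
        = ereal (real (dF + degree G0 + degree G1 + M))"
      using fdeg_monom_mult[of G0 dF] fdeg_monom_mult[of G1 dF] fdeg_monom_mult[of 1 dF] G
      unfolding gcd_eq by (simp add: F0_eq F1_eq)
    then show ?thesis
      unfolding d by (simp del: of_nat_add add: of_nat_add[symmetric])
  qed
  finally show ?thesis .
qed

lemma degree_reducing_complements_eq_iff:
  assumes "a \<noteq> 0" and F: "F0 \<noteq> 0" "F1 \<noteq> 0" and d: "d = dF + M + e"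
    and R: "degree_reducing F0 F1 a d M 0 R0 R1"
    and R': "degree_reducing F0 F1 a d M 1 R0' R1'"
  shows "(R0, R1) = (R0', R1') \<longleftrightarrow>
    ereal (real d) < fdeg F0 + fdeg F1 - fdeg (gcd F0 F1) + ereal (real M)"
proof -
  have "(R0, R1) = (R0', R1') \<longleftrightarrow> degree_reducing F0 F1 a d M 1 R0 R1"
  proof
    assume "degree_reducing F0 F1 a d M 1 R0 R1"
    from degree_reducing_1_unique[OF F(2) d this R'] show "(R0, R1) = (R0', R1')"
      by simp
  qed (use R' in simp)
  also have "\<dots> \<longleftrightarrow>
      ereal (real d) < fdeg F0 + fdeg F1 - fdeg (gcd F0 F1) + ereal (real M)"
    by (rule degree_reducing_0_1_iff[OF assms(1) F d R])
  finally show ?thesis .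
qed

end

theorem corollary2p5:
  fixes F0 F1 :: "complex poly" and a :: complex and d dF M :: nat
  assumes "a \<noteq> 0"
    and "gcd F0 F1 = monom 1 dF"
    and "dF \<le> d"
    and "M \<le> d - dF"
  shows "(F0 \<noteq> 0 \<longrightarrow> (\<exists>!(R0, R1). degree_reducing F0 F1 a d M 0 R0 R1))
       \<and> (F1 \<noteq> 0 \<longrightarrow> (\<exists>!(R0', R1'). degree_reducing F0 F1 a d M 1 R0' R1'))
       \<and> (\<forall>R0 R1 R0' R1'. F0 \<noteq> 0 \<longrightarrow> F1 \<noteq> 0 \<longrightarrow>
            degree_reducing F0 F1 a d M 0 R0 R1 \<longrightarrow>
            degree_reducing F0 F1 a d M 1 R0' R1' \<longrightarrow>
            ((R0, R1) = (R0', R1') \<longleftrightarrow>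
               ereal (real d) < fdeg F0 + fdeg F1 - fdeg (gcd F0 F1) + ereal (real M)))"
proof -
  obtain G0 G1 where "filter_pair_factorization F0 F1 G0 G1 dF"
    using assms(2) by (rule filter_pair_factorization_exists)
  then interpret filter_pair_factorization F0 F1 G0 G1 dF .
  define e where "e = d - dF - M"
  have d: "d = dF + M + e"
    using assms(3,4) by (simp add: e_def)
  show ?thesis
    using degree_reducing_0_ex1[OF _ d] degree_reducing_1_ex1[OF _ d]
      degree_reducing_complements_eq_iff[OF assms(1) _ _ d]
    by simp
qed

end
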